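(* Let $\mathcal{F}$ be a set of static graphs that does not contain only trees. Then there exists no deterministic algorithm that satisfies the eventual underlying graph specification for the class $\mathcal{COT}|_\mathcal{F}$ of connected-over-time TVGs whose underlying graph belongs to $\mathcal{F}$.
   Context: A time-varying graph (TVG) is a tuple $g=(V,E,\mathcal{T},\rho,\zeta,\phi)$ where $V=\{v_1,\dots,v_n\}$ is a static set of vertices (processes), $E\subseteq V\times V$ a static set of edges, $\mathcal{T}\subseteq\mathbb{T}$ (with $\mathbb{T}=\mathbb{N}$ or $\mathbb{R}^+$) the lifetime, $\rho:E\times\mathcal{T}\to\{0,1\}$ the presence function, $\zeta:E\times\mathcal{T}\to\mathbb{T}$ the edge latency function, and $\phi:V\times\mathcal{T}\to\mathbb{T}$ the process latency function. Processes run a local deterministic algorithm and communicate asynchronously by messages over edges; edge presence/absence is instantly detected by the endpoints; messages on an edge that disappears are lost; a primitive Send_retry$(m,q)$ invoked by $p$ at time $t$ delivers $m$ to $q$ in finite time provided there is $t'\ge t$ such that edge $\{p,q\}$ is present from $t'$ for at least $\zeta(\{p,q\},t')$ time units. A temporal path is a sequence $\{(e_1,t_1),\dots,(e_k,t_k)\}$ where $e_1,\dots,e_k$ form a path, $\rho(e_i,t_i)=1$ for all $i$, and $t_{i+1}\ge t_i+\zeta(e_i,t_i)$. A TVG is connected-over-time if for every time $t\in\mathcal{T}$ and every pair of processes $p,q$ there is a temporal path from $p$ to $q$ after time $t$; $\mathcal{COT}$ denotes this class. The underlying graph of $g$ is $(V,E)$. An eventual missing edge is an edge that is present only a finite number of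 times during the lifetime; the eventual underlying graph of $g$ is $(V,E\setminus M_g)$, $M_g$ being the set of eventual missing edges. For a set $\mathcal{F}$ of static graphs, $\mathcal{COT}|_\mathcal{F}$ is the set of TVGs in $\mathcal{COT}$ whose underlying graph belongs to $\mathcal{F}$. An algorithm satisfies the eventual underlying graph specification for a class $\mathcal{C}$ if every execution $\gamma_0,\gamma_1,\dots$ of it on any TVG $g\in\mathcal{C}$ has a suffix $\gamma_i,\gamma_{i+1},\dots$ in every configuration of which each process outputs (in an output variable) the eventual underlying graph of $g$. *)

theory Defs
  imports Main
begin

type_synonym 'v sgraph = "'v set \<times> 'v set set"

definition sgraph_wf :: "'v sgraph \<Rightarrow> bool" where
  "sgraph_wf G \<longleftrightarrow> finite (fst G) \<and>
     (\<forall>e\<in>snd G. \<exists>u v. e = {u, v} \<and> u \<noteq> v \<and> u \<in> fst G \<and> v \<in> fst G)"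

definition sgraph_connected :: "'v sgraph \<Rightarrow> bool" where
  "sgraph_connected G \<longleftrightarrow>
     (\<forall>u\<in>fst G. \<forall>v\<in>fst G. (u, v) \<in> {(x, y). {x, y} \<in> snd G}\<^sup>*)"

definition is_cycle :: "'v sgraph \<Rightarrow> 'v list \<Rightarrow> bool" where
  "is_cycle G vs \<longleftrightarrow> 3 \<le> length vs \<and> distinct vs \<and> set vs \<subseteq> fst G \<and>
     (\<forall>i < length vs. {vs ! i, vs ! ((i + 1) mod length vs)} \<in> snd G)"

definition is_tree :: "'v sgraph \<Rightarrow> bool" where
  "is_tree G \<longleftrightarrow> sgraph_wf G \<and> sgraph_connected G \<and> \<not> (\<exists>vs. is_cycle G vs)"

section \<open>Time-varying graphs (time = nat, lifetime = all of nat)\<close>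

record 'v tvg =
  tV    :: "'v set"
  tE    :: "'v set set"
  rho   :: "'v set \<Rightarrow> nat \<Rightarrow> bool"
  zeta  :: "'v set \<Rightarrow> nat \<Rightarrow> nat"

definition tvg_wf :: "'v tvg \<Rightarrow> bool" where
  "tvg_wf g \<longleftrightarrow> sgraph_wf (tV g, tE g) \<and> (\<forall>e t. 0 < zeta g e t)"

definition underlying_graph :: "'v tvg \<Rightarrow> 'v sgraph" where
  "underlying_graph g = (tV g, tE g)"

inductive journey :: "'v tvg \<Rightarrow> nat \<Rightarrow> 'v \<Rightarrow> 'v \<Rightarrow> bool" for g where
  journey_nil:  "journey g t p p"
| journey_cons: "\<lbrakk> {p, x} \<in> tE g; t \<le> t'; rho g {p, x} t';
                   journey g (t' + zeta g {p, x} t') x q \<rbrakk> \<Longrightarrow> journey g t p q"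

definition connected_over_time :: "'v tvg \<Rightarrow> bool" where
  "connected_over_time g \<longleftrightarrow> (\<forall>t. \<forall>p\<in>tV g. \<forall>q\<in>tV g. journey g t p q)"

definition COT_F :: "'v sgraph set \<Rightarrow> 'v tvg set" where
  "COT_F F = {g. tvg_wf g \<and> connected_over_time g \<and> underlying_graph g \<in> F}"

definition eventual_missing_edges :: "'v tvg \<Rightarrow> 'v set set" where
  "eventual_missing_edges g = {e \<in> tE g. finite {t. rho g e t}}"

definition eventual_underlying_graph :: "'v tvg \<Rightarrow> 'v sgraph" where
  "eventual_underlying_graph g = (tV g, tE g - eventual_missing_edges g)"

text \<open>A deterministic algorithm: each process p (its identity is known) starts in
  state init p.  At each time unit t it performs one step: it observes the set of
  currently present incident edges (given as the set of present neighbours) and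
  the set of messages (sender, message) delivered to it at time t, moves to a new
  state and emits, for each neighbour, a set of messages.  out s is the
  output variable of a process in state s.\<close>
record ('v, 's, 'm) algorithm =
  init :: "'v \<Rightarrow> 's"
  step :: "'v \<Rightarrow> 's \<Rightarrow> 'v set \<Rightarrow> ('v \<times> 'm) set \<Rightarrow> 's \<times> ('v \<Rightarrow> 'm set)"
  out  :: "'s \<Rightarrow> 'v sgraph"

definition nbrs :: "'v tvg \<Rightarrow> 'v \<Rightarrow> nat \<Rightarrow> 'v set" where
  "nbrs g p t = {q. {p, q} \<in> tE g \<and> rho g {p, q} t}"

text \<open>A message sent over edge e at time t0 is delivered at time t0 + zeta e t0
  provided e stays present during the whole interval [t0, t0 + zeta e t0];
  otherwise it is lost.\<close>
definition delivered :: "'v tvg \<Rightarrow> 'v set \<Rightarrow> nat \<Rightarrow> nat \<Rightarrow> bool" where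
  "delivered g e t0 t \<longleftrightarrow> t = t0 + zeta g e t0 \<and> (\<forall>t'. t0 \<le> t' \<and> t' \<le> t \<longrightarrow> rho g e t')"

text \<open>A configuration at time t: the local state of every process and the set of
  messages (sender, message) delivered to every process at time t.\<close>
type_synonym ('v, 's, 'm) config = "('v \<Rightarrow> 's) \<times> ('v \<Rightarrow> ('v \<times> 'm) set)"

text \<open>Messages that q sends to p in its step at time t0, in configuration c.\<close>
definition sent :: "('v, 's, 'm) algorithm \<Rightarrow> 'v tvg \<Rightarrow> ('v, 's, 'm) config \<Rightarrow> nat \<Rightarrow> 'v \<Rightarrow> 'v \<Rightarrow> 'm set" where
  "sent A g c t0 q p =
     (if p \<in> nbrs g q t0 then snd (step A q (fst c q) (nbrs g q t0) (snd c q)) p else {})"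

fun history :: "('v, 's, 'm) algorithm \<Rightarrow> 'v tvg \<Rightarrow> nat \<Rightarrow> ('v, 's, 'm) config list" where
  "history A g 0 = [(init A, \<lambda>p. {})]"
| "history A g (Suc t) =
     (let h = history A g t in
      h @ [(\<lambda>p. fst (step A p (fst (h ! t) p) (nbrs g p t) (snd (h ! t) p)),
            \<lambda>p. {(q, m). \<exists>t0 \<le> t. delivered g {q, p} t0 (Suc t) \<and> m \<in> sent A g (h ! t0) t0 q p})])"

definition execution :: "('v, 's, 'm) algorithm \<Rightarrow> 'v tvg \<Rightarrow> nat \<Rightarrow> ('v, 's, 'm) config" where
  "execution A g t = history A g t ! t"

definition output_at :: "('v, 's, 'm) algorithm \<Rightarrow> 'v tvg \<Rightarrow> nat \<Rightarrow> 'v \<Rightarrow> 'v sgraph" where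
  "output_at A g t p = out A (fst (execution A g t) p)"

definition satisfies_EUG_spec :: "('v, 's, 'm) algorithm \<Rightarrow> 'v tvg set \<Rightarrow> bool" where
  "satisfies_EUG_spec A C \<longleftrightarrow>
     (\<forall>g\<in>C. \<exists>i. \<forall>t\<ge>i. \<forall>p\<in>tV g. output_at A g t p = eventual_underlying_graph g)"

end

theory Submission
  imports Defs "HOL-Library.Infinite_Set"
begin

text \<open>Fix an edge e on a cycle of a graph G in F and let all other edges be present
  forever.  Whatever the presence pattern P of e, the resulting TVG is connected over
  time, since G without e is still connected; its eventual underlying graph is G when
  e appears infinitely often and G - {e} otherwise.  An algorithm's output at time t
  depends only on P restricted to [0, t], so it would decide in the limit whether P
  is infinitely often true.  A diagonal argument defeats this: keep e absent until the
  output settles on G - {e}, then present until it settles on G, and so on forever;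
  the limit pattern makes e appear infinitely often, yet the output keeps returning
  to G - {e}.\<close>

subsection \<open>Deciding "infinitely often" in the limit\<close>

definition extend_const :: "(nat \<Rightarrow> bool) \<Rightarrow> nat \<Rightarrow> bool \<Rightarrow> nat \<Rightarrow> bool" where
  "extend_const P T b = (\<lambda>t. if t \<le> T then P t else b)"

text \<open>Stage k: a sequence that agrees with stage k - 1 up to that stage's time and is
  constantly even k afterwards, together with a time past which N claims to have settled
  on it.\<close>
fun diagonal_stage :: "((nat \<Rightarrow> bool) \<Rightarrow> nat) \<Rightarrow> nat \<Rightarrow> (nat \<Rightarrow> bool) \<times> nat" where
  "diagonal_stage N 0 = ((\<lambda>_. True), N (\<lambda>_. True))"
| "diagonal_stage N (Suc k) =
    (let (P, T) = diagonal_stage N k; P' = extend_const P T (even (Suc k))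
     in (P', max (Suc T) (N P')))"

abbreviation stage_seq :: "((nat \<Rightarrow> bool) \<Rightarrow> nat) \<Rightarrow> nat \<Rightarrow> nat \<Rightarrow> bool" where
  "stage_seq N k \<equiv> fst (diagonal_stage N k)"

abbreviation stage_time :: "((nat \<Rightarrow> bool) \<Rightarrow> nat) \<Rightarrow> nat \<Rightarrow> nat" where
  "stage_time N k \<equiv> snd (diagonal_stage N k)"

lemma stage_seq_Suc:
  "stage_seq N (Suc k) = extend_const (stage_seq N k) (stage_time N k) (even (Suc k))"
  by (simp add: case_prod_beta Let_def)

lemma stage_time_Suc:
  "stage_time N (Suc k) = max (Suc (stage_time N k)) (N (stage_seq N (Suc k)))"
  by (simp add: case_prod_beta Let_def)

declare diagonal_stage.simps(2) [simp del]

lemma stage_time_ge_N: "N (stage_seq N k) \<le> stage_time N k"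
  by (cases k) (simp_all add: stage_time_Suc)

lemma stage_time_less_Suc: "stage_time N k < stage_time N (Suc k)"
  by (simp add: stage_time_Suc)

lemma stage_time_mono: "j \<le> k \<Longrightarrow> stage_time N j \<le> stage_time N k"
  by (rule lift_Suc_mono_le[of "stage_time N"]) (auto intro: less_imp_le stage_time_less_Suc)

lemma stage_time_ge: "k \<le> stage_time N k"
  by (induction k) (auto intro: Suc_leI le_less_trans[OF _ stage_time_less_Suc])

lemma stage_seq_after_time: "stage_time N k < t \<Longrightarrow> stage_seq N (Suc k) t = even (Suc k)"
  by (simp add: stage_seq_Suc extend_const_def)

lemma stage_seq_stable:
  "j \<le> k \<Longrightarrow> t \<le> stage_time N j \<Longrightarrow> stage_seq N k t = stage_seq N j t"
proof (induction k)
  case (Suc k)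
  show ?case
  proof (cases "j = Suc k")
    case False
    with Suc.prems have "j \<le> k" by simp
    with Suc.prems stage_time_mono[of j k N] Suc.IH show ?thesis
      by (simp add: stage_seq_Suc extend_const_def)
  qed simp
qed simp

text \<open>The limit sequence reads stage t at time t, which is frozen since t \<le> stage_time N t.\<close>
definition diagonal_limit :: "((nat \<Rightarrow> bool) \<Rightarrow> nat) \<Rightarrow> nat \<Rightarrow> bool" where
  "diagonal_limit N t = stage_seq N t t"

lemma diagonal_limit_eq_stage:
  assumes "t \<le> stage_time N k"
  shows "diagonal_limit N t = stage_seq N k t"
proof (cases "t \<le> k")
  case True
  then show ?thesis
    using stage_seq_stable[OF True, of t N] stage_time_ge[of t N] by (simp add: diagonal_limit_def)
next
  case False
  then show ?thesis
    using stage_seq_stable[of k t t N] assms by (simp add: diagonal_limit_def)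
qed

lemma infinite_diagonal_limit: "infinite {t. diagonal_limit N t}"
  unfolding infinite_nat_iff_unbounded_le
proof
  fix m
  let ?k = "Suc (Suc (2 * m))"
  have "stage_seq N ?k (stage_time N ?k)"
    using stage_seq_after_time stage_time_less_Suc by simp
  then have "diagonal_limit N (stage_time N ?k)"
    using diagonal_limit_eq_stage[of "stage_time N ?k" N ?k] by simp
  moreover have "m \<le> stage_time N ?k"
    using stage_time_ge[of ?k N] by simp
  ultimately show "\<exists>n\<ge>m. n \<in> {t. diagonal_limit N t}" by blast
qed

lemma finite_stage_seq_odd: "finite {t. stage_seq N (Suc (2 * k)) t}"
proof (rule finite_subset)
  show "{t. stage_seq N (Suc (2 * k)) t} \<subseteq> {..stage_time N (2 * k)}"
    using stage_seq_after_time[of N "2 * k"] by (auto simp: not_le[symmetric])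
qed simp

lemma causal_no_limit_decision_infinitely_often:
  fixes f :: "(nat \<Rightarrow> bool) \<Rightarrow> nat \<Rightarrow> 'a"
  assumes causal: "\<And>P Q t. (\<forall>s\<le>t. P s = Q s) \<Longrightarrow> f P t = f Q t"
    and "a \<noteq> b"
  shows "\<exists>P. \<forall>i. \<exists>t\<ge>i. f P t \<noteq> (if finite {t. P t} then a else b)"
proof (rule ccontr)
  assume "\<nexists>P. \<forall>i. \<exists>t\<ge>i. f P t \<noteq> (if finite {t. P t} then a else b)"
  then have settles: "\<exists>i. \<forall>t\<ge>i. f P t = (if finite {t. P t} then a else b)" for P
    by blast
  define N where "N P = (SOME i. \<forall>t\<ge>i. f P t = (if finite {t. P t} then a else b))" for P
  have N: "\<forall>t\<ge>N P. f P t = (if finite {t. P t} then a else b)" for P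
    unfolding N_def by (rule someI_ex[OF settles])
  let ?L = "diagonal_limit N"
  obtain i where i: "\<forall>t\<ge>i. f ?L t = b"
    using settles[of ?L] infinite_diagonal_limit[of N] by auto
  let ?k = "Suc (2 * i)"
  have "f ?L (stage_time N ?k) = f (stage_seq N ?k) (stage_time N ?k)"
    by (rule causal) (simp add: diagonal_limit_eq_stage)
  also have "\<dots> = a"
    using N[of "stage_seq N ?k"] stage_time_ge_N[of N ?k] finite_stage_seq_odd[of N i] by simp
  finally have "f ?L (stage_time N ?k) = a" .
  moreover have "i \<le> stage_time N ?k"
    using stage_time_ge[of ?k N] by simp
  ultimately show False
    using i \<open>a \<noteq> b\<close> by simp
qed

subsection \<open>Executions depend only on the past\<close>

lemma history_cong:
  assumes "tE g = tE g'" "zeta g = zeta g'" "\<forall>s\<le>t. \<forall>e. rho g e s = rho g' e s"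
  shows "history A g t = history A g' t"
  using assms(3)
proof (induction t)
  case (Suc t)
  then have IH: "history A g t = history A g' t" by auto
  have nbrs: "nbrs g p s = nbrs g' p s" if "s \<le> t" for p s
    using Suc.prems assms that unfolding nbrs_def by auto
  have delivered: "delivered g e t0 (Suc t) = delivered g' e t0 (Suc t)" for e t0
    using Suc.prems assms unfolding delivered_def by auto
  have sent: "sent A g c t0 q p = sent A g' c t0 q p" if "t0 \<le> t" for c t0 q p
    using nbrs that unfolding sent_def by auto
  let ?h = "history A g t"
  have states: "(\<lambda>p. fst (step A p (fst (?h ! t) p) (nbrs g p t) (snd (?h ! t) p))) =
                (\<lambda>p. fst (step A p (fst (?h ! t) p) (nbrs g' p t) (snd (?h ! t) p)))"
    using nbrs by simp
  have messages:
    "(\<lambda>p. {(q, m). \<exists>t0\<le>t. delivered g {q, p} t0 (Suc t) \<and> m \<in> sent A g (?h ! t0) t0 q p}) =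
     (\<lambda>p. {(q, m). \<exists>t0\<le>t. delivered g' {q, p} t0 (Suc t) \<and> m \<in> sent A g' (?h ! t0) t0 q p})"
    unfolding delivered by (intro ext) (auto simp: sent)
  show ?case
    using IH states messages by (simp add: Let_def)
qed simp

definition intermittent_tvg :: "'v sgraph \<Rightarrow> 'v set \<Rightarrow> (nat \<Rightarrow> bool) \<Rightarrow> 'v tvg" where
  "intermittent_tvg G e P =
     \<lparr>tV = fst G, tE = snd G, rho = (\<lambda>e' t. if e' = e then P t else True), zeta = (\<lambda>_ _. 1)\<rparr>"

lemma intermittent_tvg_simps [simp]:
  "tV (intermittent_tvg G e P) = fst G"
  "tE (intermittent_tvg G e P) = snd G"
  "rho (intermittent_tvg G e P) = (\<lambda>e' t. if e' = e then P t else True)"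
  "zeta (intermittent_tvg G e P) = (\<lambda>_ _. 1)"
  by (simp_all add: intermittent_tvg_def)

lemma output_at_intermittent_tvg_cong:
  assumes "\<forall>s\<le>t. P s = Q s"
  shows "output_at A (intermittent_tvg G e P) t p = output_at A (intermittent_tvg G e Q) t p"
proof -
  have "history A (intermittent_tvg G e P) t = history A (intermittent_tvg G e Q) t"
    by (rule history_cong) (use assms in auto)
  then show ?thesis by (simp add: output_at_def execution_def)
qed

lemma eventual_underlying_graph_intermittent_tvg:
  assumes "e \<in> snd G"
  shows "eventual_underlying_graph (intermittent_tvg G e P) =
           (if finite {t. P t} then (fst G, snd G - {e}) else G)"
proof -
  have "{t. if e' = e then P t else True} = (if e' = e then {t. P t} else UNIV)" for e'
    by simp
  then have "eventual_missing_edges (intermittent_tvg G e P) = (if finite {t. P t} then {e} else {})"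
    using assms unfolding eventual_missing_edges_def by auto
  then show ?thesis
    unfolding eventual_underlying_graph_def by simp
qed

lemma journey_intermittent_tvg:
  assumes "(p, q) \<in> {(x, y). {x, y} \<in> snd G - {e}}\<^sup>*"
  shows "journey (intermittent_tvg G e P) t p q"
  using assms
proof (induction arbitrary: t rule: converse_rtrancl_induct)
  case base
  then show ?case by (rule journey_nil)
next
  case (step y z)
  show ?case by (rule journey_cons[where t' = t and x = z]) (use step in auto)
qed

subsection \<open>Removing a cycle edge preserves connectivity\<close>

lemma is_cycle_edge:
  assumes "is_cycle G vs" "i < length vs"
  shows "{vs ! i, vs ! ((i + 1) mod length vs)} \<in> snd G"
  using assms unfolding is_cycle_def by blast

lemma is_cycle_first_edge:
  assumes "is_cycle G vs"
  shows "{vs ! 0, vs ! 1} \<in> snd G"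
proof -
  have "3 \<le> length vs" using assms unfolding is_cycle_def by simp
  then have "0 < length vs" "1 mod length vs = 1" by auto
  then show ?thesis using is_cycle_edge[OF assms, of 0] by simp
qed

lemma is_cycle_nth_neq:
  assumes "is_cycle G vs" "i < length vs" "j < length vs" "i \<noteq> j"
  shows "vs ! i \<noteq> vs ! j"
  using assms nth_eq_iff_index_eq unfolding is_cycle_def by blast

lemma is_cycle_rtrancl_avoiding_first_edge:
  assumes cyc: "is_cycle G vs"
  shows "(vs ! 1, vs ! 0) \<in> {(x, y). {x, y} \<in> snd G - {{vs ! 0, vs ! 1}}}\<^sup>*"
proof -
  let ?R = "{(x, y). {x, y} \<in> snd G - {{vs ! 0, vs ! 1}}}"
  let ?n = "length vs"
  have n3: "3 \<le> ?n" using cyc unfolding is_cycle_def by simp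
  have other_edge: "(vs ! j, vs ! ((j + 1) mod ?n)) \<in> ?R" if "1 \<le> j" "j < ?n" for j
  proof -
    have "\<exists>k\<in>{j, (j + 1) mod ?n}. 2 \<le> k \<and> k < ?n"
      using that n3 by (cases "j + 1 = ?n") auto
    then obtain k where k: "k \<in> {j, (j + 1) mod ?n}" "2 \<le> k" "k < ?n" by blast
    have "vs ! k \<noteq> vs ! 0" by (rule is_cycle_nth_neq[OF cyc]) (use k in auto)
    moreover have "vs ! k \<noteq> vs ! 1" by (rule is_cycle_nth_neq[OF cyc]) (use k in auto)
    ultimately have "{vs ! j, vs ! ((j + 1) mod ?n)} \<noteq> {vs ! 0, vs ! 1}" using k(1) by auto
    then show ?thesis using is_cycle_edge[OF cyc that(2)] by simp
  qed
  have walk: "(vs ! 1, vs ! j) \<in> ?R\<^sup>*" if "1 \<le> j" "j < ?n" for j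
    using that
  proof (induction j)
    case (Suc j)
    show ?case
    proof (cases "j = 0")
      case False
      with Suc have "(vs ! 1, vs ! j) \<in> ?R\<^sup>*" by simp
      moreover have "(vs ! j, vs ! Suc j) \<in> ?R"
        using other_edge[of j] False Suc.prems by simp
      ultimately show ?thesis by (rule rtrancl_into_rtrancl)
    qed simp
  qed simp
  have "?n - 1 + 1 = ?n"
    using n3 by simp
  then have "(?n - 1 + 1) mod ?n = 0"
    by (metis mod_self)
  then have "(vs ! (?n - 1), vs ! 0) \<in> ?R"
    using other_edge[of "?n - 1"] n3 by simp
  moreover have "(vs ! 1, vs ! (?n - 1)) \<in> ?R\<^sup>*"
    by (rule walk) (use n3 in auto)
  ultimately show ?thesis
    by (rule rtrancl_into_rtrancl[rotated])
qed

lemma sgraph_connected_minus_cycle_edge: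
  assumes cyc: "is_cycle G vs" and "sgraph_connected G" "u \<in> fst G" "v \<in> fst G"
  shows "(u, v) \<in> {(x, y). {x, y} \<in> snd G - {{vs ! 0, vs ! 1}}}\<^sup>*"
proof -
  let ?R = "{(x, y). {x, y} \<in> snd G - {{vs ! 0, vs ! 1}}}"
  have "sym (?R\<^sup>*)" by (rule sym_rtrancl) (auto simp: sym_def insert_commute)
  with is_cycle_rtrancl_avoiding_first_edge[OF cyc]
  have "(vs ! 1, vs ! 0) \<in> ?R\<^sup>*" "(vs ! 0, vs ! 1) \<in> ?R\<^sup>*"
    by (auto simp: sym_def)
  then have "{(x, y). {x, y} \<in> snd G} \<subseteq> ?R\<^sup>*"
    by (auto simp: doubleton_eq_iff)
  then have "{(x, y). {x, y} \<in> snd G}\<^sup>* \<subseteq> ?R\<^sup>*"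
    by (rule rtrancl_subset_rtrancl)
  moreover have "(u, v) \<in> {(x, y). {x, y} \<in> snd G}\<^sup>*"
    using assms unfolding sgraph_connected_def by auto
  ultimately show ?thesis by auto
qed

lemma intermittent_cycle_edge_in_COT_F:
  assumes "G \<in> F" "sgraph_wf G" "sgraph_connected G" "is_cycle G vs"
  shows "intermittent_tvg G {vs ! 0, vs ! 1} P \<in> COT_F F"
proof -
  have "connected_over_time (intermittent_tvg G {vs ! 0, vs ! 1} P)"
    unfolding connected_over_time_def
  proof (intro allI ballI)
    fix t p q
    assume "p \<in> tV (intermittent_tvg G {vs ! 0, vs ! 1} P)" "q \<in> tV (intermittent_tvg G {vs ! 0, vs ! 1} P)"
    then show "journey (intermittent_tvg G {vs ! 0, vs ! 1} P) t p q"
      by (intro journey_intermittent_tvg sgraph_connected_minus_cycle_edge[OF assms(4,3)]) simp_all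
  qed
  then show ?thesis
    using assms(1,2) unfolding COT_F_def tvg_wf_def underlying_graph_def by simp
qed

theorem theorem12:
  fixes F :: "'v sgraph set"
  assumes "\<exists>G\<in>F. sgraph_wf G \<and> sgraph_connected G \<and> \<not> is_tree G"
  shows "\<not> (\<exists>A :: ('v, 's, 'm) algorithm. satisfies_EUG_spec A (COT_F F))"
proof
  assume "\<exists>A :: ('v, 's, 'm) algorithm. satisfies_EUG_spec A (COT_F F)"
  then obtain A :: "('v, 's, 'm) algorithm" where spec: "satisfies_EUG_spec A (COT_F F)" ..
  obtain G where G: "G \<in> F" "sgraph_wf G" "sgraph_connected G" "\<not> is_tree G"
    using assms by blast
  then obtain vs where cyc: "is_cycle G vs" unfolding is_tree_def by blast
  define e where "e = {vs ! 0, vs ! 1}"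
  have e: "e \<in> snd G" unfolding e_def by (rule is_cycle_first_edge[OF cyc])
  have "vs \<noteq> []" "set vs \<subseteq> fst G" using cyc unfolding is_cycle_def by auto
  then have v: "vs ! 0 \<in> fst G" by auto
  have "(fst G, snd G - {e}) \<noteq> G" using e by (cases G) auto
  then obtain P where P: "\<forall>i. \<exists>t\<ge>i. output_at A (intermittent_tvg G e P) t (vs ! 0) \<noteq>
                        (if finite {t. P t} then (fst G, snd G - {e}) else G)"
    using causal_no_limit_decision_infinitely_often
            [where f = "\<lambda>P t. output_at A (intermittent_tvg G e P) t (vs ! 0)",
             OF output_at_intermittent_tvg_cong]
    by blast
  have "intermittent_tvg G e P \<in> COT_F F"
    unfolding e_def using intermittent_cycle_edge_in_COT_F[OF G(1-3) cyc] .
  with spec obtain i where i: "\<forall>t\<ge>i. \<forall>p\<in>fst G. output_at A (intermittent_tvg G e P) t p =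
                                eventual_underlying_graph (intermittent_tvg G e P)"
    unfolding satisfies_EUG_spec_def by auto
  obtain t where t: "i \<le> t" and neq: "output_at A (intermittent_tvg G e P) t (vs ! 0) \<noteq>
                                       (if finite {t. P t} then (fst G, snd G - {e}) else G)"
    using P by blast
  from neq i[rule_format, OF t v, unfolded eventual_underlying_graph_intermittent_tvg[OF e]]
  show False by contradiction
qed

end
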